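(* The system \[ \frac{dR}{dZ} = -\tan\theta+\frac{R}{2Z},\qquad \frac{d\theta}{dZ} = (n-1)\Bigl(\frac{1}{\cos\theta}-\frac{1}{R}\Bigr),\qquad Z>0,\ R>0,\ \theta\in\bigl(-\tfrac{\pi}{2},\tfrac{\pi}{2}\bigr), \] admits a unique formal solution of the form \[ R(Z)=\sum_{k\in\mathbb{N}}\frac{R_k}{Z^k},\qquad \theta(Z)=\sum_{k\in\mathbb{N}}\frac{\theta_k}{Z^k},\qquad (R_k,\theta_k)\in\mathbb{R}^2,\ R_0>0,\ -\tfrac{\pi}{2}<\theta_0<\tfrac{\pi}{2}. \] Moreover, the expansion $\sum_{k}R_k/Z^k$ is even in $Z$ (i.e. $R_k=0$ for $k$ odd) and the expansion $\sum_k\theta_k/Z^k$ is odd in $Z$ (i.e. $\theta_k=0$ for $k$ even).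
   Context: Let $n\ge 2$ be an integer. The axisymmetric capillary equation in $\mathbb{R}^{n+1}$, with the normalization $\kappa=n-1$, is the system $dr/dz=-\tan\theta$, $d\theta/dz=(n-1)\bigl(z/\cos\theta-1/r\bigr)$ with $r>0$, $\theta\in(-\pi/2,\pi/2)$. After the change of variables $(R,Z)=(zr,\,z^2/2)$ it becomes the system in $(R,\theta)$ as functions of $Z$ displayed in the claim. A formal solution means an expansion of the stated form which, when substituted into that system with $\tan\theta$ and $\cos\theta$ replaced by their power series in $\theta$, makes both equations hold at every order in $Z^{-1}$. *)

theory Defs
  imports "HOL-Analysis.Derivative" "HOL-Computational_Algebra.Formal_Power_Series"
begin

(* Formal power series are taken in the variable w = 1/Z, i.e. the fps with
   coefficients (R_k) represents R(Z) = sum_k R_k / Z^k. *)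

definition taylor_fps :: "(real \<Rightarrow> real) \<Rightarrow> real \<Rightarrow> real fps" where
  "taylor_fps f a = Abs_fps (\<lambda>j. (deriv ^^ j) f a / fact j)"

definition subst_fps :: "(real \<Rightarrow> real) \<Rightarrow> real fps \<Rightarrow> real fps" where
  "subst_fps f th = fps_compose (taylor_fps f (fps_nth th 0)) (th - fps_const (fps_nth th 0))"

(* d/dZ of a series in w = 1/Z: since dw/dZ = -w^2, d/dZ = -w^2 d/dw *)
definition dZ :: "real fps \<Rightarrow> real fps" where
  "dZ F = - (fps_X ^ 2 * fps_deriv F)"

definition formal_solution :: "nat \<Rightarrow> real fps \<Rightarrow> real fps \<Rightarrow> bool" where
  "formal_solution n R th \<longleftrightarrow>
     dZ R = - subst_fps tan th + fps_const (1/2) * fps_X * R \<and>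
     dZ th = fps_const (real n - 1) * (inverse (subst_fps cos th) - inverse R)"

definition admissible_formal_solution :: "nat \<Rightarrow> real fps \<Rightarrow> real fps \<Rightarrow> bool" where
  "admissible_formal_solution n R th \<longleftrightarrow>
     fps_nth R 0 > 0 \<and> - (pi/2) < fps_nth th 0 \<and> fps_nth th 0 < pi/2 \<and> formal_solution n R th"

end

theory Submission
  imports Defs "HOL-Computational_Algebra.Polynomial"
begin

(* Comparing coefficients of w^(k+1), w = 1/Z, the system determines theta_(k+1) and R_(k+1)
   from the lower coefficients: in tan theta the coefficient of w^(k+1) is theta_(k+1) plus
   lower-order terms since tan'(0) = 1, while in 1/cos theta only lower-order terms enter since
   cos'(0) = 0. The constant terms force theta_0 = 0 and R_0 = 1, whence existence and
   uniqueness. Since cos is even and tan odd, (R(w), theta(w)) -> (R(-w), -theta(-w)) maps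
   solutions to solutions, so uniqueness yields the parities. *)

unbundle no vec_syntax
unbundle fps_syntax

lemma fps_mult_nth_of_nth_below_zero:
  fixes e g :: "'a::comm_semiring_0 fps"
  assumes "\<forall>i<m. e $ i = 0"
  shows "(e * g) $ m = e $ m * g $ 0"
proof -
  have "{0..m} = insert m {0..<m}" by auto
  then show ?thesis
    using assms by (simp add: fps_mult_nth)
qed

lemma fps_compose_nth_diff:
  fixes a b b' :: "'a::comm_ring_1 fps"
  assumes b0: "b $ 0 = 0" and b'0: "b' $ 0 = 0"
    and agree: "\<forall>j<m. b $ j = b' $ j" and m: "m \<ge> 1"
  shows "(a oo b') $ m - (a oo b) $ m = a $ 1 * (b' $ m - b $ m)"
proof -
  have low: "\<forall>j<m. (b' - b) $ j = 0" using agree by simp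
  have power_diff: "(b' ^ i) $ m - (b ^ i) $ m = (if i = 1 then b' $ m - b $ m else 0)" for i
  proof -
    have "(b' ^ i) $ m - (b ^ i) $ m = ((b' - b) * (\<Sum>j<i. b ^ (i - Suc j) * b' ^ j)) $ m"
      by (metis fps_sub_nth power_diff_sumr2)
    also have "\<dots> = (b' - b) $ m * (\<Sum>j<i. (0::'a) ^ (i - Suc j) * 0 ^ j)"
      by (simp add: fps_mult_nth_of_nth_below_zero[OF low] fps_sum_nth fps_nth_power_0 b0 b'0)
    also have "(\<Sum>j<i. (0::'a) ^ (i - Suc j) * 0 ^ j) = (if i = 1 then 1 else 0)"
      by (cases "i = 1") (auto simp: power_0_left intro!: sum.neutral)
    finally show ?thesis by simp
  qed
  have "(a oo b') $ m - (a oo b) $ m = (\<Sum>i=0..m. a $ i * ((b' ^ i) $ m - (b ^ i) $ m))"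
    by (simp add: fps_compose_nth sum_subtractf[symmetric] algebra_simps)
  also have "\<dots> = (\<Sum>i=0..m. if i = 1 then a $ 1 * (b' $ m - b $ m) else 0)"
    by (rule sum.cong) (auto simp: power_diff)
  finally show ?thesis using m by simp
qed

lemma fps_inverse_nth_diff:
  fixes A B :: "'a::field fps"
  assumes A0: "A $ 0 \<noteq> 0" and agree: "\<forall>j<m. A $ j = B $ j" "A $ 0 = B $ 0"
  shows "inverse A $ m - inverse B $ m = - (A $ m - B $ m) / (A $ 0)\<^sup>2"
proof -
  have B0: "B $ 0 \<noteq> 0" using A0 agree by simp
  have "inverse A - inverse B = (B - A) * (inverse A * inverse B)"
    by (simp add: algebra_simps inverse_mult_eq_1'[OF A0] inverse_mult_eq_1'[OF B0]
        flip: mult.assoc)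
  then have "inverse A $ m - inverse B $ m = ((B - A) * (inverse A * inverse B)) $ m"
    by (metis fps_sub_nth)
  also have "\<dots> = (B $ m - A $ m) * (inverse (A $ 0) * inverse (B $ 0))"
    using agree by (subst fps_mult_nth_of_nth_below_zero) auto
  finally show ?thesis
    using A0 agree by (simp add: field_simps power2_eq_square)
qed

lemma taylor_fps_nth_0 [simp]: "taylor_fps f a $ 0 = f a"
  by (simp add: taylor_fps_def)

lemma subst_fps_nth_0 [simp]: "subst_fps f th $ 0 = f (th $ 0)"
  by (simp add: subst_fps_def)

lemma subst_fps_eq_compose: "th $ 0 = 0 \<Longrightarrow> subst_fps f th = taylor_fps f 0 oo th"
  by (simp add: subst_fps_def)

lemma subst_fps_nth_diff:
  assumes agree: "\<forall>j<m. th $ j = th' $ j" "th $ 0 = th' $ 0"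
  shows "subst_fps f th' $ m - subst_fps f th $ m = deriv f (th $ 0) * (th' $ m - th $ m)"
proof (cases "m = 0")
  case False
  have "subst_fps f th' $ m - subst_fps f th $ m =
      taylor_fps f (th $ 0) $ 1 * ((th' - fps_const (th $ 0)) $ m - (th - fps_const (th $ 0)) $ m)"
    unfolding subst_fps_def agree(2)[symmetric]
    by (rule fps_compose_nth_diff) (use agree False in auto)
  then show ?thesis by (simp add: taylor_fps_def)
qed (use agree in simp)

lemma higher_deriv_cos: "(deriv ^^ j) cos = (\<lambda>x. cos (x + real j * (pi/2)))"
proof (induction j)
  case (Suc j)
  have "DERIV (\<lambda>x. cos (x + real j * (pi/2))) y :> cos (y + real (Suc j) * (pi/2))" for y
  proof -
    have "y + real (Suc j) * (pi/2) = (y + real j * (pi/2)) + pi/2"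
      by (simp add: algebra_simps)
    then have "cos (y + real (Suc j) * (pi/2)) = - sin (y + real j * (pi/2))"
      by (simp only: cos_add cos_pi_half sin_pi_half)
    then show ?thesis by (auto intro!: derivative_eq_intros)
  qed
  then have "deriv (\<lambda>x. cos (x + real j * (pi/2))) = (\<lambda>y. cos (y + real (Suc j) * (pi/2)))"
    by (intro ext DERIV_imp_deriv)
  with Suc.IH show ?case by simp
qed simp

lemma higher_deriv_cos_odd_zero:
  assumes "odd j"
  shows "(deriv ^^ j) cos (0::real) = 0"
proof -
  have "cos (of_int (int j) * (pi/2)) = 0"
    using assms by (subst cos_zero_iff_int) (auto intro!: exI[of _ "int j"])
  then show ?thesis by (simp add: higher_deriv_cos)
qed

(* The j-th derivative of tan is P_j(tan x), since tan' = 1 + tan^2. *)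
primrec tan_deriv_poly :: "nat \<Rightarrow> real poly" where
  "tan_deriv_poly 0 = [:0, 1:]"
| "tan_deriv_poly (Suc j) = pderiv (tan_deriv_poly j) * [:1, 0, 1:]"

lemma poly_pderiv_minus:
  fixes p :: "real poly"
  assumes "\<And>t. poly p (-t) = s * poly p t"
  shows "poly (pderiv p) (-t) = - s * poly (pderiv p) t"
proof -
  have "DERIV (\<lambda>t. poly p (-t)) t :> poly (pderiv p) (-t) * (-1)"
    by (rule DERIV_chain2[OF poly_DERIV]) (auto intro!: derivative_eq_intros)
  moreover have "DERIV (\<lambda>t. poly p (-t)) t :> s * poly (pderiv p) t"
    unfolding assms by (auto intro!: derivative_eq_intros)
  ultimately show ?thesis
    using DERIV_unique by fastforce
qed

lemma poly_tan_deriv_poly_minus: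
  "poly (tan_deriv_poly j) (-t) = (-1) ^ Suc j * poly (tan_deriv_poly j) t"
proof (induction j arbitrary: t)
  case (Suc j)
  show ?case
    using poly_pderiv_minus[OF Suc.IH, of t] by (simp add: algebra_simps)
qed simp

lemma higher_deriv_tan:
  "x \<in> {-(pi/2)<..<pi/2} \<Longrightarrow> (deriv ^^ j) tan x = poly (tan_deriv_poly j) (tan x)"
proof (induction j arbitrary: x)
  case (Suc j)
  have cos_x: "cos x \<noteq> 0" using cos_gt_zero_pi[of x] Suc.prems by auto
  have "inverse ((cos x)\<^sup>2) = 1 + tan x * tan x"
    using cos_x sin_cos_squared_add[of x] by (simp add: tan_def field_simps power2_eq_square)
  then have "DERIV (\<lambda>y. poly (tan_deriv_poly j) (tan y)) x
      :> poly (tan_deriv_poly (Suc j)) (tan x)"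
    using DERIV_chain2[OF poly_DERIV DERIV_tan[OF cos_x]] by (simp add: algebra_simps)
  then have "DERIV ((deriv ^^ j) tan) x :> poly (tan_deriv_poly (Suc j)) (tan x)"
    by (rule has_field_derivative_transform_within_open[where S="{-(pi/2)<..<pi/2}"])
       (use Suc in auto)
  then show ?case by (simp add: DERIV_imp_deriv)
qed simp

lemma higher_deriv_tan_even_zero: "even j \<Longrightarrow> (deriv ^^ j) tan (0::real) = 0"
  using higher_deriv_tan[of 0 j] poly_tan_deriv_poly_minus[of j 0] by simp

lemma fps_compose_uminus_X_nth: "((F :: 'a::comm_ring_1 fps) oo - fps_X) $ j = (-1) ^ j * F $ j"
  by (simp add: fps_compose_uminus')

lemma taylor_fps_reflect_even:
  assumes "\<And>j. odd j \<Longrightarrow> (deriv ^^ j) f 0 = 0"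
  shows "taylor_fps f 0 oo - fps_X = taylor_fps f 0"
proof (rule fps_ext)
  show "(taylor_fps f 0 oo - fps_X) $ j = taylor_fps f 0 $ j" for j
    by (cases "even j") (simp_all add: fps_compose_uminus_X_nth taylor_fps_def assms)
qed

lemma taylor_fps_reflect_odd:
  assumes "\<And>j. even j \<Longrightarrow> (deriv ^^ j) f 0 = 0"
  shows "taylor_fps f 0 oo - fps_X = - taylor_fps f 0"
proof (rule fps_ext)
  show "(taylor_fps f 0 oo - fps_X) $ j = (- taylor_fps f 0) $ j" for j
    by (cases "even j") (simp_all add: fps_compose_uminus_X_nth taylor_fps_def assms)
qed

lemma subst_fps_reflect:
  assumes "th $ 0 = 0"
  shows "subst_fps f (- (th oo - fps_X)) = ((taylor_fps f 0 oo - fps_X) oo th) oo - fps_X"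
proof -
  have "- (th oo - fps_X) = (- fps_X oo th) oo - fps_X"
    using assms by (simp add: fps_compose_uminus)
  then show ?thesis
    using assms by (simp add: subst_fps_eq_compose fps_compose_assoc)
qed

lemma dZ_nth_0 [simp]: "dZ F $ 0 = 0"
  by (simp add: dZ_def fps_X_power_mult_nth)

lemma dZ_nth_Suc [simp]: "dZ F $ Suc k = - real k * F $ k"
  by (cases k) (simp_all add: dZ_def fps_X_power_mult_nth, simp add: algebra_simps)

lemma dZ_compose_uminus_X: "dZ (F oo - fps_X) = - (dZ F oo - fps_X)"
proof (rule fps_ext)
  show "dZ (F oo - fps_X) $ m = (- (dZ F oo - fps_X)) $ m" for m
    by (cases m) (simp_all add: fps_compose_uminus_X_nth)
qed

lemma formal_solution_iff_nth:
  "formal_solution n R th \<longleftrightarrow>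
     tan (th $ 0) = 0 \<and> (real n - 1) * (inverse (cos (th $ 0)) - inverse (R $ 0)) = 0 \<and>
     (\<forall>k. - real k * R $ k = - (subst_fps tan th $ Suc k) + R $ k / 2 \<and>
          - real k * th $ k =
            (real n - 1) * (inverse (subst_fps cos th) $ Suc k - inverse R $ Suc k))"
proof -
  have all_nat: "(\<forall>m. P m) \<longleftrightarrow> P 0 \<and> (\<forall>k. P (Suc k))" for P :: "nat \<Rightarrow> bool"
    by (metis nat.exhaust)
  show ?thesis
    unfolding formal_solution_def fps_eq_iff all_nat[where P = "\<lambda>m. dZ _ $ m = _ $ m"]
    by (auto simp: mult.assoc)
qed

lemma subst_fps_nth_Suc_cutoff:
  "subst_fps f th $ Suc k =
     subst_fps f (fps_cutoff (Suc k) th) $ Suc k + deriv f (th $ 0) * th $ Suc k"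
proof -
  have "subst_fps f th $ Suc k - subst_fps f (fps_cutoff (Suc k) th) $ Suc k
      = deriv f (fps_cutoff (Suc k) th $ 0) * (th $ Suc k - fps_cutoff (Suc k) th $ Suc k)"
    by (rule subst_fps_nth_diff) auto
  then show ?thesis by simp
qed

lemma subst_fps_nth_cutoff_if_deriv_zero:
  assumes "deriv f (th $ 0) = 0" "j \<le> Suc k"
  shows "subst_fps f (fps_cutoff (Suc k) th) $ j = subst_fps f th $ j"
proof -
  have "subst_fps f th $ j - subst_fps f (fps_cutoff (Suc k) th) $ j
      = deriv f (fps_cutoff (Suc k) th $ 0) * (th $ j - fps_cutoff (Suc k) th $ j)"
    by (rule subst_fps_nth_diff) (use assms in auto)
  also have "\<dots> = 0"
    using assms by (cases "j = Suc k") auto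
  finally show ?thesis by simp
qed

lemma inverse_fps_nth_Suc_cutoff:
  fixes A :: "'a::field fps"
  assumes "A $ 0 \<noteq> 0"
  shows "inverse A $ Suc k = inverse (fps_cutoff (Suc k) A) $ Suc k - A $ Suc k / (A $ 0)\<^sup>2"
proof -
  have "inverse A $ Suc k - inverse (fps_cutoff (Suc k) A) $ Suc k
      = - (A $ Suc k - fps_cutoff (Suc k) A $ Suc k) / (A $ 0)\<^sup>2"
    by (rule fps_inverse_nth_diff) (use assms in auto)
  then show ?thesis by (simp add: diff_eq_eq)
qed

lemma deriv_tan_0: "deriv tan (0::real) = 1"
  by (rule DERIV_imp_deriv) (use DERIV_tan[of 0] in simp)

lemma deriv_cos_0: "deriv cos (0::real) = 0"
  by (rule DERIV_imp_deriv) (use DERIV_cos[of 0] in simp)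

definition next_theta_coeff :: "nat \<Rightarrow> real fps \<Rightarrow> real fps \<Rightarrow> real" where
  "next_theta_coeff k R th =
     (real k + 1/2) * R $ k - subst_fps tan (fps_cutoff (Suc k) th) $ Suc k"

definition next_R_coeff :: "nat \<Rightarrow> nat \<Rightarrow> real fps \<Rightarrow> real fps \<Rightarrow> real" where
  "next_R_coeff n k R th =
     inverse (fps_cutoff (Suc k) R) $ Suc k - inverse (subst_fps cos (fps_cutoff (Suc k) th)) $ Suc k
     - real k * th $ k / (real n - 1)"

lemma fps_cutoff_idem [simp]: "fps_cutoff n (fps_cutoff n f) = fps_cutoff n f"
  by (simp add: fps_eq_iff)

lemma next_coeff_cutoff [simp]:
  "next_theta_coeff k (fps_cutoff (Suc k) R) (fps_cutoff (Suc k) th) = next_theta_coeff k R th"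
  "next_R_coeff n k (fps_cutoff (Suc k) R) (fps_cutoff (Suc k) th) = next_R_coeff n k R th"
  by (simp_all add: next_theta_coeff_def next_R_coeff_def)

lemma formal_solution_iff_recursion:
  assumes n: "n \<ge> 2" and th0: "th $ 0 = 0" and R0: "R $ 0 = 1"
  shows "formal_solution n R th \<longleftrightarrow>
    (\<forall>k. th $ Suc k = next_theta_coeff k R th \<and> R $ Suc k = next_R_coeff n k R th)"
proof -
  have "(- real k * R $ k = - (subst_fps tan th $ Suc k) + R $ k / 2 \<and>
         - real k * th $ k = (real n - 1) * (inverse (subst_fps cos th) $ Suc k - inverse R $ Suc k))
    \<longleftrightarrow> th $ Suc k = next_theta_coeff k R th \<and> R $ Suc k = next_R_coeff n k R th" for k
  proof -
    have tan_nth: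
      "subst_fps tan th $ Suc k = subst_fps tan (fps_cutoff (Suc k) th) $ Suc k + th $ Suc k"
      using subst_fps_nth_Suc_cutoff[of tan th k] th0 deriv_tan_0 by simp
    have "\<forall>j<Suc (Suc k). subst_fps cos th $ j = subst_fps cos (fps_cutoff (Suc k) th) $ j"
      using subst_fps_nth_cutoff_if_deriv_zero[of cos th] th0 deriv_cos_0 by simp
    then have cos_nth: "inverse (subst_fps cos th) $ Suc k
        = inverse (subst_fps cos (fps_cutoff (Suc k) th)) $ Suc k"
      using fps_inverse_nth_diff[of "subst_fps cos th" "Suc k" "subst_fps cos (fps_cutoff (Suc k) th)"]
        th0 by simp
    have inv_nth: "inverse R $ Suc k = inverse (fps_cutoff (Suc k) R) $ Suc k - R $ Suc k"
      using inverse_fps_nth_Suc_cutoff[of R k] R0 by simp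
    have "- real k * R $ k = - (T + th $ Suc k) + R $ k / 2 \<longleftrightarrow>
        th $ Suc k = (real k + 1/2) * R $ k - T" for T
      by (auto simp: algebra_simps)
    moreover have "- real k * th $ k = (real n - 1) * (C - (I - R $ Suc k)) \<longleftrightarrow>
        R $ Suc k = I - C - real k * th $ k / (real n - 1)" for C I
      using n by (auto simp: field_simps)
    ultimately show ?thesis
      unfolding next_theta_coeff_def next_R_coeff_def by (simp only: tan_nth cos_nth inv_nth)
  qed
  then show ?thesis
    by (simp add: formal_solution_iff_nth th0 R0)
qed

lemma admissible_formal_solution_iff_recursion:
  assumes "n \<ge> 2"
  shows "admissible_formal_solution n R th \<longleftrightarrow> th $ 0 = 0 \<and> R $ 0 = 1 \<and>
    (\<forall>k. th $ Suc k = next_theta_coeff k R th \<and> R $ Suc k = next_R_coeff n k R th)"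
proof
  assume adm: "admissible_formal_solution n R th"
  then have "tan (th $ 0) = 0" "- (pi/2) < th $ 0" "th $ 0 < pi/2"
    by (auto simp: admissible_formal_solution_def formal_solution_iff_nth)
  then have th0: "th $ 0 = 0"
    by (metis arctan_tan arctan_zero_zero)
  have "(real n - 1) * (1 - inverse (R $ 0)) = 0"
    using adm th0 by (simp add: admissible_formal_solution_def formal_solution_iff_nth)
  then have R0: "R $ 0 = 1"
    using assms by simp
  show "th $ 0 = 0 \<and> R $ 0 = 1 \<and>
    (\<forall>k. th $ Suc k = next_theta_coeff k R th \<and> R $ Suc k = next_R_coeff n k R th)"
    using adm assms th0 R0 by (simp add: admissible_formal_solution_def formal_solution_iff_recursion)
qed (use assms in \<open>simp add: admissible_formal_solution_def formal_solution_iff_recursion\<close>)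

lemma admissible_formal_solution_unique:
  assumes n: "n \<ge> 2"
    and sol: "admissible_formal_solution n R th" and sol': "admissible_formal_solution n R' th'"
  shows "R = R' \<and> th = th'"
proof -
  note rec = sol[unfolded admissible_formal_solution_iff_recursion[OF n]]
    and rec' = sol'[unfolded admissible_formal_solution_iff_recursion[OF n]]
  have "R $ j = R' $ j \<and> th $ j = th' $ j" for j
  proof (induction j rule: less_induct)
    case (less j)
    show ?case
    proof (cases j)
      case (Suc k)
      with less have "fps_cutoff (Suc k) R = fps_cutoff (Suc k) R'"
        "fps_cutoff (Suc k) th = fps_cutoff (Suc k) th'"
        by (auto simp: fps_cutoff_eq_fps_cutoff_iff)
      then have "next_theta_coeff k R th = next_theta_coeff k R' th'"
        "next_R_coeff n k R th = next_R_coeff n k R' th'"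
        by (metis next_coeff_cutoff(1), metis next_coeff_cutoff(2))
      then show ?thesis
        using rec rec' Suc by simp
    qed (use rec rec' in simp)
  qed
  then show ?thesis
    by (simp add: fps_eq_iff)
qed

primrec truncated_solution :: "nat \<Rightarrow> nat \<Rightarrow> real fps \<times> real fps" where
  "truncated_solution n 0 = (1, 0)"
| "truncated_solution n (Suc k) =
    (let (R, th) = truncated_solution n k
     in (R + fps_const (next_R_coeff n k R th) * fps_X ^ Suc k,
         th + fps_const (next_theta_coeff k R th) * fps_X ^ Suc k))"

definition solution_R :: "nat \<Rightarrow> real fps" where
  "solution_R n = Abs_fps (\<lambda>i. fst (truncated_solution n i) $ i)"

definition solution_theta :: "nat \<Rightarrow> real fps" where
  "solution_theta n = Abs_fps (\<lambda>i. snd (truncated_solution n i) $ i)"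

lemma truncated_solution_Suc_nth:
  fixes n k :: nat
  defines "T \<equiv> truncated_solution n k"
  shows "fst (truncated_solution n (Suc k)) $ i =
           fst T $ i + (if i = Suc k then next_R_coeff n k (fst T) (snd T) else 0)"
    and "snd (truncated_solution n (Suc k)) $ i =
           snd T $ i + (if i = Suc k then next_theta_coeff k (fst T) (snd T) else 0)"
  by (auto simp: T_def split_beta Let_def)

lemma truncated_solution_nth:
  "fst (truncated_solution n k) $ i = (if i \<le> k then solution_R n $ i else 0) \<and>
   snd (truncated_solution n k) $ i = (if i \<le> k then solution_theta n $ i else 0)"
proof (induction k arbitrary: i)
  case 0
  then show ?case
    by (simp add: solution_R_def solution_theta_def)
next
  case (Suc k)
  show ?case
  proof (cases "i = Suc k")
    case True
    then show ?thesis
      by (simp add: solution_R_def solution_theta_def)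
  next
    case False
    then show ?thesis
      using Suc.IH[of i] truncated_solution_Suc_nth[of n k i]
      by (simp del: truncated_solution.simps)
  qed
qed

lemma fps_cutoff_solution:
  "fps_cutoff (Suc k) (solution_R n) = fst (truncated_solution n k)"
  "fps_cutoff (Suc k) (solution_theta n) = snd (truncated_solution n k)"
  by (simp_all add: fps_eq_iff truncated_solution_nth)

lemma solution_recursion:
  "solution_theta n $ Suc k = next_theta_coeff k (solution_R n) (solution_theta n)"
  "solution_R n $ Suc k = next_R_coeff n k (solution_R n) (solution_theta n)"
proof -
  have high: "fst (truncated_solution n k) $ Suc k = 0" "snd (truncated_solution n k) $ Suc k = 0"
    using truncated_solution_nth[of n k "Suc k"] by simp_all
  show "solution_theta n $ Suc k = next_theta_coeff k (solution_R n) (solution_theta n)"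
    using truncated_solution_Suc_nth(2)[of n k "Suc k"] high
      next_coeff_cutoff(1)[of k "solution_R n" "solution_theta n", unfolded fps_cutoff_solution]
    by (simp del: truncated_solution.simps add: solution_theta_def)
  show "solution_R n $ Suc k = next_R_coeff n k (solution_R n) (solution_theta n)"
    using truncated_solution_Suc_nth(1)[of n k "Suc k"] high
      next_coeff_cutoff(2)[of n k "solution_R n" "solution_theta n", unfolded fps_cutoff_solution]
    by (simp del: truncated_solution.simps add: solution_R_def)
qed

lemma admissible_formal_solution_exists:
  assumes "n \<ge> 2"
  shows "admissible_formal_solution n (solution_R n) (solution_theta n)"
  using solution_recursion
  by (simp add: admissible_formal_solution_iff_recursion[OF assms] solution_R_def solution_theta_def)

lemma admissible_formal_solution_reflect:
  assumes n: "n \<ge> 2" and sol: "admissible_formal_solution n R th"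
  shows "admissible_formal_solution n (R oo - fps_X) (- (th oo - fps_X))"
proof -
  have th0: "th $ 0 = 0" and R0: "R $ 0 = 1"
    using sol by (simp_all add: admissible_formal_solution_iff_recursion[OF n])
  have tan_eq: "dZ R = - subst_fps tan th + fps_const (1/2) * fps_X * R"
    and cos_eq: "dZ th = fps_const (real n - 1) * (inverse (subst_fps cos th) - inverse R)"
    using sol by (simp_all add: admissible_formal_solution_def formal_solution_def)
  have tan_reflect: "subst_fps tan (- (th oo - fps_X)) = - (subst_fps tan th oo - fps_X)"
    using subst_fps_reflect[OF th0, of tan] th0
    by (simp add: taylor_fps_reflect_odd higher_deriv_tan_even_zero fps_compose_uminus
        subst_fps_eq_compose)
  have cos_reflect: "subst_fps cos (- (th oo - fps_X)) = subst_fps cos th oo - fps_X"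
    using subst_fps_reflect[OF th0, of cos] th0
    by (simp add: taylor_fps_reflect_even higher_deriv_cos_odd_zero subst_fps_eq_compose)
  have tan_dZ: "dZ (R oo - fps_X) =
      - subst_fps tan (- (th oo - fps_X)) + fps_const (1/2) * fps_X * (R oo - fps_X)"
    unfolding dZ_compose_uminus_X tan_eq tan_reflect
    by (simp add: fps_compose_sub_distrib fps_compose_mult_distrib fps_compose_uminus)
  have "dZ (- (th oo - fps_X)) = - dZ (th oo - fps_X)"
    by (simp add: dZ_def)
  also have "\<dots> = dZ th oo - fps_X"
    by (simp add: dZ_compose_uminus_X)
  also have "\<dots> = fps_const (real n - 1) *
      ((inverse (subst_fps cos th) oo - fps_X) - (inverse R oo - fps_X))"
    by (simp add: cos_eq fps_compose_mult_distrib fps_compose_sub_distrib)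
  also have "\<dots> = fps_const (real n - 1) *
      (inverse (subst_fps cos (- (th oo - fps_X))) - inverse (R oo - fps_X))"
    using th0 R0 by (simp add: cos_reflect fps_inverse_compose)
  finally show ?thesis
    using tan_dZ th0 R0 by (simp add: admissible_formal_solution_def formal_solution_def)
qed

lemma admissible_formal_solution_parity:
  assumes n: "n \<ge> 2" and sol: "admissible_formal_solution n R th"
  shows "odd k \<Longrightarrow> R $ k = 0" and "even k \<Longrightarrow> th $ k = 0"
proof -
  have reflect: "R = R oo - fps_X" "th = - (th oo - fps_X)"
    using admissible_formal_solution_unique[OF n sol admissible_formal_solution_reflect[OF n sol]]
    by simp_all
  have "R $ k = (-1) ^ k * R $ k"
    using arg_cong[OF reflect(1), of "\<lambda>F. F $ k"] by (simp add: fps_compose_uminus_X_nth)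
  then show "odd k \<Longrightarrow> R $ k = 0"
    by simp
  have "th $ k = - ((-1) ^ k * th $ k)"
    using arg_cong[OF reflect(2), of "\<lambda>F. F $ k"] by (simp add: fps_compose_uminus_X_nth)
  then show "even k \<Longrightarrow> th $ k = 0"
    by simp
qed

theorem proposition1:
  fixes n :: nat
  assumes "n \<ge> 2"
  shows "(\<exists>!p. admissible_formal_solution n (fst p) (snd p)) \<and>
         (\<forall>R th. admissible_formal_solution n R th \<longrightarrow>
            (\<forall>k. odd k \<longrightarrow> fps_nth R k = 0) \<and> (\<forall>k. even k \<longrightarrow> fps_nth th k = 0))"
proof (intro conjI allI impI)
  show "\<exists>!p. admissible_formal_solution n (fst p) (snd p)"
    using admissible_formal_solution_exists[OF assms] admissible_formal_solution_unique[OF assms]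
    by (intro ex1I[of _ "(solution_R n, solution_theta n)"]) (auto simp: prod_eq_iff)
qed (use admissible_formal_solution_parity[OF assms] in auto)

end
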